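(* Let $X$ be a Banach lattice, $(e_n)$ a semi-normalized basic sequence in $X$ with closed span $E$ and biorthogonal functionals $e_n^*\in E^*$, and let $C>0$. The following are equivalent. (i) For all $x\in E$, all $m\in\mathbb{N}$ and all greedy orderings $\pi$ of $x$, $\|G^\vee_{\pi,m}(x)\|\le C\|x\|$. (ii) For all $x\in E$ and all $m\in\mathbb{N}$, $\|\mathcal{G}^\vee_m(x)\|\le C\|x\|$. (iii) For all $x\in E$ and all $m\in\mathbb{N}$ there exists a greedy ordering $\pi$ of $x$ with $\|G^\vee_{\pi,m}(x)\|\le C\|x\|$. (iv) $\|\mathcal{G}^\vee_{|\mathrm{supp}(x)|}(x)\|\le C\|x\|$ whenever $x\in E$ has finite support and $\mathcal{G}_{|\mathrm{supp}(x)|}(x)$ is a lattice strictly greedy sum of $x$. (v) $\|\mathcal{G}^\vee_{|\mathrm{supp}(x)|}(x)\|\le C\|x\|$ for all $x\in E$ of finite support. Furthermore, the least $C$ for which these estimates hold is $\sup_m\|\mathcal{G}^\vee_m\|$, where $\|\mathcal{G}^\vee_m\|=\sup\{\|\mathcal{G}^\vee_m(x)\|: x\in E,\ \|x\|=1\}$.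
   Context: $\mathrm{supp}(x)=\{n: e_n^*(x)\neq0\}$. A greedy ordering of $x\in E$ is an injective map $\pi:\mathbb{N}\to\mathbb{N}$ with $\mathrm{supp}(x)\subseteq\pi(\mathbb{N})$ and $(|e^*_{\pi(n)}(x)|)_n$ non-increasing. $G_{\pi,m}(x)=\sum_{n=1}^m e^*_{\pi(n)}(x)e_{\pi(n)}$ and $G^\vee_{\pi,m}(x)=\bigvee_{n=1}^m|G_{\pi,n}(x)|$. The natural greedy ordering $\rho$ of $x$ is the greedy ordering in which ties $|e^*_{\rho(j)}(x)|=|e^*_{\rho(k)}(x)|$ with $j<k$ satisfy $\rho(j)<\rho(k)$; $\mathcal{G}_m(x)=G_{\rho,m}(x)$ and $\mathcal{G}^\vee_m(x)=\bigvee_{n=1}^m|\mathcal{G}_n(x)|$. $G_{\pi,m}(x)$ is a lattice strictly greedy sum of $x$ of order $m$ if $|e^*_{\pi(i)}(x)|\ne|e^*_{\pi(j)}(x)|$ for all distinct $i,j\in\{1,\dots,m\}$ with $e^*_{\pi(i)}(x)\ne0$. *)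

theory Defs
  imports "HOL-Analysis.Analysis"
begin

definition labs :: "'a::{lattice, uminus} \<Rightarrow> 'a" where
  "labs x = sup x (- x)"

class banach_lattice = banach + ordered_real_vector + lattice +
  assumes lattice_norm: "sup x (- x) \<le> sup y (- y) \<Longrightarrow> norm x \<le> norm y"

definition closed_span :: "(nat \<Rightarrow> 'a::real_normed_vector) \<Rightarrow> 'a set" where
  "closed_span e = closure (span (range e))"

definition basic_sequence :: "(nat \<Rightarrow> 'a::real_normed_vector) \<Rightarrow> bool" where
  "basic_sequence e \<longleftrightarrow> (\<forall>x\<in>closed_span e. \<exists>!a. (\<lambda>n. a n *\<^sub>R e n) sums x)"

definition semi_normalized :: "(nat \<Rightarrow> 'a::real_normed_vector) \<Rightarrow> bool" where
  "semi_normalized e \<longleftrightarrow> (\<exists>c d. 0 < c \<and> (\<forall>n. c \<le> norm (e n) \<and> norm (e n) \<le> d))"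

definition coef :: "(nat \<Rightarrow> 'a::real_normed_vector) \<Rightarrow> nat \<Rightarrow> 'a \<Rightarrow> real" where
  "coef e n x = (THE a. (\<lambda>k. a k *\<^sub>R e k) sums x) n"

definition supp :: "(nat \<Rightarrow> 'a::real_normed_vector) \<Rightarrow> 'a \<Rightarrow> nat set" where
  "supp e x = {n. coef e n x \<noteq> 0}"

definition greedy_ordering :: "(nat \<Rightarrow> 'a::real_normed_vector) \<Rightarrow> (nat \<Rightarrow> nat) \<Rightarrow> 'a \<Rightarrow> bool" where
  "greedy_ordering e \<pi> x \<longleftrightarrow> inj \<pi> \<and> supp e x \<subseteq> range \<pi> \<and>
     (\<forall>n. \<bar>coef e (\<pi> (Suc n)) x\<bar> \<le> \<bar>coef e (\<pi> n) x\<bar>)"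

definition natural_greedy_ordering :: "(nat \<Rightarrow> 'a::real_normed_vector) \<Rightarrow> (nat \<Rightarrow> nat) \<Rightarrow> 'a \<Rightarrow> bool" where
  "natural_greedy_ordering e \<rho> x \<longleftrightarrow> greedy_ordering e \<rho> x \<and>
     (\<forall>j k. j < k \<and> \<bar>coef e (\<rho> j) x\<bar> = \<bar>coef e (\<rho> k) x\<bar> \<longrightarrow> \<rho> j < \<rho> k)"

text \<open>Greedy sums (0-indexed: G e pi m x uses pi 0, ..., pi (m-1)).\<close>
definition G :: "(nat \<Rightarrow> 'a::real_normed_vector) \<Rightarrow> (nat \<Rightarrow> nat) \<Rightarrow> nat \<Rightarrow> 'a \<Rightarrow> 'a" where
  "G e \<pi> m x = (\<Sum>n<m. coef e (\<pi> n) x *\<^sub>R e (\<pi> n))"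

primrec Gvee :: "(nat \<Rightarrow> 'a::banach_lattice) \<Rightarrow> (nat \<Rightarrow> nat) \<Rightarrow> nat \<Rightarrow> 'a \<Rightarrow> 'a" where
  "Gvee e \<pi> 0 x = 0"
| "Gvee e \<pi> (Suc m) x = sup (Gvee e \<pi> m x) (labs (G e \<pi> (Suc m) x))"

definition natord :: "(nat \<Rightarrow> 'a::real_normed_vector) \<Rightarrow> 'a \<Rightarrow> nat \<Rightarrow> nat" where
  "natord e x = (SOME \<rho>. natural_greedy_ordering e \<rho> x)"

definition NG :: "(nat \<Rightarrow> 'a::real_normed_vector) \<Rightarrow> nat \<Rightarrow> 'a \<Rightarrow> 'a" where
  "NG e m x = G e (natord e x) m x"

definition NGvee :: "(nat \<Rightarrow> 'a::banach_lattice) \<Rightarrow> nat \<Rightarrow> 'a \<Rightarrow> 'a" where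
  "NGvee e m x = Gvee e (natord e x) m x"

definition lattice_strictly_greedy :: "(nat \<Rightarrow> 'a::real_normed_vector) \<Rightarrow> (nat \<Rightarrow> nat) \<Rightarrow> nat \<Rightarrow> 'a \<Rightarrow> bool" where
  "lattice_strictly_greedy e \<pi> m x \<longleftrightarrow>
     (\<forall>i<m. \<forall>j<m. i \<noteq> j \<and> coef e (\<pi> i) x \<noteq> 0 \<longrightarrow> \<bar>coef e (\<pi> i) x\<bar> \<noteq> \<bar>coef e (\<pi> j) x\<bar>)"

definition NGvee_norm :: "(nat \<Rightarrow> 'a::banach_lattice) \<Rightarrow> nat \<Rightarrow> ereal" where
  "NGvee_norm e m = (SUP x\<in>{x\<in>closed_span e. norm x = 1}. ereal (norm (NGvee e m x)))"

end

theory Submission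
  imports Defs
begin

text \<open>
  Conditions (ii) and (iii) are special cases of (i), and (iv) is a special case of (ii); the
  converses rest on two approximation arguments.

  If the first \<open>m\<close> greedy terms of \<open>x\<close> along \<open>\<pi>\<close> are multiplied by the weights
  \<open>1 + t (m - i)\<close>, they become strictly decreasing and strictly dominate all other coefficients.
  Hence every greedy ordering of the perturbed vector \<open>x\<^sub>t\<close>, the natural one in particular, has
  the same first \<open>m\<close> terms as \<open>\<pi>\<close>, and these form a lattice strictly greedy sum. Bounds for
  \<open>x\<^sub>t\<close> pass to \<open>x\<close> as \<open>t \<rightarrow> 0\<close> because \<open>G\<^sup>\<or>\<^sub>m\<close> depends continuously on
  the greedy sums. This gives (ii) \<open>\<Longrightarrow>\<close> (i) and (iv) \<open>\<Longrightarrow>\<close> (v); (iii) \<open>\<Longrightarrow>\<close> (iv)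
  holds because a lattice strictly greedy sum of full order is the same for every greedy ordering.

  For (v) \<open>\<Longrightarrow>\<close> (ii), the partial sums \<open>y\<^sub>N\<close> of the expansion of \<open>x\<close> eventually have
  the same first \<open>m\<close> natural greedy terms as \<open>x\<close>, and \<open>G\<^sup>\<or>\<^sub>m(y\<^sub>N) \<le> G\<^sup>\<or>\<^sub>k(y\<^sub>N)\<close>
  for \<open>k = |supp y\<^sub>N|\<close>. The least constant is \<open>sup\<^sub>m \<parallel>G\<^sup>\<or>\<^sub>m\<parallel>\<close> because
  \<open>G\<^sup>\<or>\<^sub>m\<close> is positively homogeneous.
\<close>

section \<open>Greedy orderings of real sequences\<close>

definition greedy_seq :: "(nat \<Rightarrow> real) \<Rightarrow> (nat \<Rightarrow> nat) \<Rightarrow> bool" where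
  "greedy_seq a \<pi> \<longleftrightarrow> inj \<pi> \<and> {n. a n \<noteq> 0} \<subseteq> range \<pi> \<and> (\<forall>n. \<bar>a (\<pi> (Suc n))\<bar> \<le> \<bar>a (\<pi> n)\<bar>)"

definition natural_greedy_seq :: "(nat \<Rightarrow> real) \<Rightarrow> (nat \<Rightarrow> nat) \<Rightarrow> bool" where
  "natural_greedy_seq a \<rho> \<longleftrightarrow>
     greedy_seq a \<rho> \<and> (\<forall>j k. j < k \<and> \<bar>a (\<rho> j)\<bar> = \<bar>a (\<rho> k)\<bar> \<longrightarrow> \<rho> j < \<rho> k)"

definition strict_greedy_prefix :: "(nat \<Rightarrow> real) \<Rightarrow> (nat \<Rightarrow> nat) \<Rightarrow> nat \<Rightarrow> bool" where
  "strict_greedy_prefix a \<pi> m \<longleftrightarrow> (\<forall>i<m. a (\<pi> i) \<noteq> 0 \<longrightarrow> \<bar>a (\<pi> (Suc i))\<bar> < \<bar>a (\<pi> i)\<bar>)"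

definition greedy_terms_agree ::
    "(nat \<Rightarrow> real) \<Rightarrow> (nat \<Rightarrow> nat) \<Rightarrow> (nat \<Rightarrow> real) \<Rightarrow> (nat \<Rightarrow> nat) \<Rightarrow> nat \<Rightarrow> bool" where
  "greedy_terms_agree a \<pi> b \<sigma> m \<longleftrightarrow> (\<forall>i<m. b (\<sigma> i) = a (\<pi> i) \<and> (a (\<pi> i) \<noteq> 0 \<longrightarrow> \<sigma> i = \<pi> i))"

lemma greedy_ordering_iff_greedy_seq:
  "greedy_ordering e \<pi> x \<longleftrightarrow> greedy_seq (\<lambda>n. coef e n x) \<pi>"
  unfolding greedy_ordering_def greedy_seq_def supp_def by simp

lemma natural_greedy_ordering_iff_natural_greedy_seq:
  "natural_greedy_ordering e \<rho> x \<longleftrightarrow> natural_greedy_seq (\<lambda>n. coef e n x) \<rho>"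
  unfolding natural_greedy_ordering_def natural_greedy_seq_def greedy_ordering_iff_greedy_seq by simp

lemma greedy_seq_antimono:
  assumes "greedy_seq a \<pi>" and "i \<le> j"
  shows "\<bar>a (\<pi> j)\<bar> \<le> \<bar>a (\<pi> i)\<bar>"
  using assms lift_Suc_antimono_le[of "\<lambda>n. \<bar>a (\<pi> n)\<bar>"] unfolding greedy_seq_def by blast

lemma greedy_seq_support_iff:
  assumes \<pi>: "greedy_seq a \<pi>" and fin: "finite {n. a n \<noteq> 0}"
  shows "a (\<pi> i) \<noteq> 0 \<longleftrightarrow> i < card {n. a n \<noteq> 0}"
proof -
  define P where "P = {i. a (\<pi> i) \<noteq> 0}"
  have "bij_betw \<pi> P {n. a n \<noteq> 0}"
    using \<pi> unfolding bij_betw_def P_def greedy_seq_def by (auto intro: inj_on_subset)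
  then have card_P: "card P = card {n. a n \<noteq> 0}" and fin_P: "finite P"
    using fin by (auto simp: bij_betw_same_card bij_betw_finite)
  have "P \<subseteq> {..<card P}"
  proof
    fix i assume "i \<in> P"
    then have "{..i} \<subseteq> P"
      using greedy_seq_antimono[OF \<pi>] unfolding P_def by fastforce
    then have "card {..i} \<le> card P" using fin_P by (rule card_mono[rotated])
    then show "i \<in> {..<card P}" by simp
  qed
  then have "P = {..<card {n. a n \<noteq> 0}}"
    unfolding card_P[symmetric] by (rule card_subset_eq[OF finite_lessThan]) simp_all
  then show ?thesis unfolding P_def set_eq_iff by simp
qed

lemma strict_greedy_prefix_distinct:
  assumes \<pi>: "greedy_seq a \<pi>" and strict: "strict_greedy_prefix a \<pi> m"
  shows "\<forall>i<m. \<forall>j<m. i \<noteq> j \<and> a (\<pi> i) \<noteq> 0 \<longrightarrow> \<bar>a (\<pi> i)\<bar> \<noteq> \<bar>a (\<pi> j)\<bar>"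
proof -
  have less: "\<bar>a (\<pi> j)\<bar> < \<bar>a (\<pi> i)\<bar>" if "i < j" "i < m" "a (\<pi> i) \<noteq> 0" for i j
    using greedy_seq_antimono[OF \<pi>, of "Suc i" j] strict that
    unfolding strict_greedy_prefix_def by fastforce
  show ?thesis
  proof (intro allI impI)
    fix i j assume "i < m" "j < m" "i \<noteq> j \<and> a (\<pi> i) \<noteq> 0"
    then consider "i < j" | "j < i" "a (\<pi> j) \<noteq> 0"
      using greedy_seq_antimono[OF \<pi>, of j i] by fastforce
    then show "\<bar>a (\<pi> i)\<bar> \<noteq> \<bar>a (\<pi> j)\<bar>"
      by cases (use less \<open>i < m\<close> \<open>j < m\<close> \<open>i \<noteq> j \<and> a (\<pi> i) \<noteq> 0\<close> in fastforce)+
  qed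
qed

lemma strict_greedy_prefix_if_distinct:
  assumes \<pi>: "greedy_seq a \<pi>" and "a (\<pi> m) = 0"
    and distinct: "\<forall>i<m. \<forall>j<m. i \<noteq> j \<and> a (\<pi> i) \<noteq> 0 \<longrightarrow> \<bar>a (\<pi> i)\<bar> \<noteq> \<bar>a (\<pi> j)\<bar>"
  shows "strict_greedy_prefix a \<pi> m"
  unfolding strict_greedy_prefix_def
proof (intro allI impI)
  fix i assume "i < m" "a (\<pi> i) \<noteq> 0"
  show "\<bar>a (\<pi> (Suc i))\<bar> < \<bar>a (\<pi> i)\<bar>"
  proof (cases "Suc i = m")
    case False
    then have "\<bar>a (\<pi> i)\<bar> \<noteq> \<bar>a (\<pi> (Suc i))\<bar>"
      using distinct \<open>i < m\<close> \<open>a (\<pi> i) \<noteq> 0\<close> by (simp add: Suc_lessI)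
    moreover have "\<bar>a (\<pi> (Suc i))\<bar> \<le> \<bar>a (\<pi> i)\<bar>" using \<pi> unfolding greedy_seq_def by blast
    ultimately show ?thesis by simp
  qed (use \<open>a (\<pi> m) = 0\<close> \<open>a (\<pi> i) \<noteq> 0\<close> in auto)
qed

lemma greedy_terms_agreeI:
  assumes \<pi>: "greedy_seq a \<pi>" and "inj \<sigma>"
    and restriction: "\<And>n. b n \<noteq> 0 \<Longrightarrow> b n = a n"
    and nonzero: "\<And>i. i < m \<Longrightarrow> a (\<pi> i) \<noteq> 0 \<Longrightarrow> \<sigma> i = \<pi> i \<and> b (\<pi> i) = a (\<pi> i)"
  shows "greedy_terms_agree a \<pi> b \<sigma> m"
proof -
  have "b (\<sigma> i) = 0" if "i < m" "a (\<pi> i) = 0" for i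
  proof (rule ccontr)
    assume "b (\<sigma> i) \<noteq> 0"
    then have "a (\<sigma> i) \<noteq> 0" using restriction by metis
    then obtain q where q: "\<sigma> i = \<pi> q" using \<pi> unfolding greedy_seq_def by blast
    have "q < i"
      using greedy_seq_antimono[OF \<pi>, of i q] \<open>a (\<sigma> i) \<noteq> 0\<close> \<open>a (\<pi> i) = 0\<close> q by force
    then have "\<sigma> q = \<sigma> i" using nonzero[of q] \<open>i < m\<close> \<open>a (\<sigma> i) \<noteq> 0\<close> q by simp
    with \<open>inj \<sigma>\<close> \<open>q < i\<close> show False by (auto dest: injD)
  qed
  then show ?thesis using nonzero unfolding greedy_terms_agree_def by fastforce
qed

lemma index_eq_if_agree_below:
  assumes "inj \<pi>" "inj \<sigma>" "\<And>l. l < i \<Longrightarrow> \<sigma> l = \<pi> l" "\<sigma> j = \<pi> q" "j < i \<or> q < i"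
  shows "j = q"
  using assms by (metis injD)

lemma greedy_terms_agree_if_strict_greedy_prefix:
  assumes \<pi>: "greedy_seq a \<pi>" and \<sigma>: "greedy_seq a \<sigma>" and strict: "strict_greedy_prefix a \<pi> m"
  shows "greedy_terms_agree a \<pi> a \<sigma> m"
proof -
  have inj: "inj \<pi>" "inj \<sigma>" using \<pi> \<sigma> unfolding greedy_seq_def by auto
  have "\<sigma> i = \<pi> i" if "i < m" "a (\<pi> i) \<noteq> 0" for i
    using that
  proof (induction i rule: less_induct)
    case (less i)
    have below: "\<sigma> l = \<pi> l" if "l < i" for l
      using less greedy_seq_antimono[OF \<pi>, of l i] that by force
    have "\<pi> i \<in> range \<sigma>" using \<sigma> less.prems unfolding greedy_seq_def by auto
    then obtain l where l: "\<sigma> l = \<pi> i" by auto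
    have "i \<le> l" using index_eq_if_agree_below[OF inj below l] by force
    then have ge: "\<bar>a (\<pi> i)\<bar> \<le> \<bar>a (\<sigma> i)\<bar>" using greedy_seq_antimono[OF \<sigma>] l by metis
    then have "\<sigma> i \<in> range \<pi>" using \<pi> less.prems unfolding greedy_seq_def by auto
    then obtain q where q: "\<sigma> i = \<pi> q" by auto
    have "\<not> q < i" using index_eq_if_agree_below[OF inj below q] by force
    moreover have "\<not> i < q"
    proof
      assume "i < q"
      then have "\<bar>a (\<pi> q)\<bar> \<le> \<bar>a (\<pi> (Suc i))\<bar>" using greedy_seq_antimono[OF \<pi>] by simp
      also have "\<dots> < \<bar>a (\<pi> i)\<bar>" using strict less.prems unfolding strict_greedy_prefix_def by blast
      finally show False using ge q by simp
    qed
    ultimately show ?case using q by simp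
  qed
  then show ?thesis by (intro greedy_terms_agreeI[OF \<pi> inj(2)]) simp_all
qed

text \<open>Since both orderings break ties by index, passing to a restriction \<open>b\<close> of \<open>a\<close>
  cannot reorder the first \<open>m\<close> greedy terms.\<close>

lemma greedy_terms_agree_restriction:
  assumes \<rho>: "natural_greedy_seq a \<rho>" and \<sigma>: "natural_greedy_seq b \<sigma>"
    and restriction: "\<And>n. b n \<noteq> 0 \<Longrightarrow> b n = a n" and top: "\<And>i. i < m \<Longrightarrow> b (\<rho> i) = a (\<rho> i)"
  shows "greedy_terms_agree a \<rho> b \<sigma> m"
proof -
  have g\<rho>: "greedy_seq a \<rho>" and g\<sigma>: "greedy_seq b \<sigma>"
    using \<rho> \<sigma> unfolding natural_greedy_seq_def by auto
  have inj: "inj \<rho>" "inj \<sigma>" using g\<rho> g\<sigma> unfolding greedy_seq_def by auto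
  have "\<sigma> i = \<rho> i" if "i < m" "a (\<rho> i) \<noteq> 0" for i
    using that
  proof (induction i rule: less_induct)
    case (less i)
    have below: "\<sigma> l = \<rho> l" if "l < i" for l
      using less greedy_seq_antimono[OF g\<rho>, of l i] that by force
    have b\<rho>: "b (\<rho> i) = a (\<rho> i)" using top less.prems by simp
    have "\<rho> i \<in> range \<sigma>" using g\<sigma> b\<rho> less.prems unfolding greedy_seq_def by auto
    then obtain l where l: "\<sigma> l = \<rho> i" by auto
    have "i \<le> l" using index_eq_if_agree_below[OF inj below l] by force
    show ?case
    proof (rule ccontr)
      assume ne: "\<sigma> i \<noteq> \<rho> i"
      with l \<open>i \<le> l\<close> have "i < l" by (metis le_neq_implies_less)
      then have ge: "\<bar>a (\<rho> i)\<bar> \<le> \<bar>b (\<sigma> i)\<bar>"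
        using greedy_seq_antimono[OF g\<sigma>, of i l] l b\<rho> by simp
      then have ab: "a (\<sigma> i) = b (\<sigma> i)" using restriction less.prems by force
      then have "\<sigma> i \<in> range \<rho>" using g\<rho> ge less.prems unfolding greedy_seq_def by auto
      then obtain q where q: "\<sigma> i = \<rho> q" by auto
      have "\<not> q < i" using index_eq_if_agree_below[OF inj below q] by force
      with ne q have "i < q" by (metis linorder_neqE_nat)
      then have tie: "\<bar>a (\<rho> i)\<bar> = \<bar>a (\<rho> q)\<bar>"
        using greedy_seq_antimono[OF g\<rho>, of i q] ge ab q by simp
      then have "\<rho> i < \<rho> q" using \<rho> \<open>i < q\<close> unfolding natural_greedy_seq_def by blast
      moreover have "\<sigma> i < \<sigma> l"
        using \<sigma> \<open>i < l\<close> tie ab q l b\<rho> unfolding natural_greedy_seq_def by metis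
      ultimately show False using q l by simp
    qed
  qed
  then show ?thesis using top by (intro greedy_terms_agreeI[OF g\<rho> inj(2) restriction]) simp_all
qed

text \<open>The subtraction \<open>m - i\<close> is truncated, so only the first \<open>m\<close> terms along \<open>\<pi>\<close>
  are reweighted.\<close>

lemma greedy_seq_perturbation:
  assumes \<pi>: "greedy_seq a \<pi>" and "t > 0"
    and on_\<pi>: "\<And>i. b (\<pi> i) = (1 + t * real (m - i)) * a (\<pi> i)"
    and off_\<pi>: "\<And>n. n \<notin> range \<pi> \<Longrightarrow> b n = a n"
  shows "b n = 0 \<longleftrightarrow> a n = 0" and "greedy_seq b \<pi>" and "strict_greedy_prefix b \<pi> m"
proof -
  define w where "w i = 1 + t * real (m - i)" for i
  have w_pos: "0 < w i" for i unfolding w_def using \<open>t > 0\<close> by (simp add: add_pos_nonneg)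
  have w_antimono: "w (Suc i) \<le> w i" for i unfolding w_def using \<open>t > 0\<close> by simp
  have w_strict: "w (Suc i) < w i" if "i < m" for i unfolding w_def using \<open>t > 0\<close> that by simp
  have b_\<pi>: "b (\<pi> i) = w i * a (\<pi> i)" for i using on_\<pi> unfolding w_def .
  then have abs_b: "\<bar>b (\<pi> i)\<bar> = w i * \<bar>a (\<pi> i)\<bar>" for i
    by (simp add: abs_mult abs_of_pos[OF w_pos])
  show zero: "b n = 0 \<longleftrightarrow> a n = 0" for n
  proof (cases "n \<in> range \<pi>")
    case True
    then obtain i where "n = \<pi> i" by auto
    then show ?thesis using b_\<pi>[of i] w_pos[of i] by simp
  qed (simp add: off_\<pi>)
  have a_mono: "\<bar>a (\<pi> (Suc i))\<bar> \<le> \<bar>a (\<pi> i)\<bar>" for i using \<pi> unfolding greedy_seq_def by blast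
  have "w (Suc i) * \<bar>a (\<pi> (Suc i))\<bar> \<le> w i * \<bar>a (\<pi> i)\<bar>" for i
    by (intro mult_mono w_antimono a_mono) (use w_pos in \<open>simp_all add: less_imp_le\<close>)
  then show "greedy_seq b \<pi>" using \<pi> zero abs_b unfolding greedy_seq_def by auto
  show "strict_greedy_prefix b \<pi> m"
    unfolding strict_greedy_prefix_def
  proof (intro allI impI)
    fix i assume "i < m" "b (\<pi> i) \<noteq> 0"
    then have "0 < \<bar>a (\<pi> i)\<bar>" using zero by simp
    have "w (Suc i) * \<bar>a (\<pi> (Suc i))\<bar> \<le> w (Suc i) * \<bar>a (\<pi> i)\<bar>"
      using w_pos a_mono by (simp add: less_imp_le mult_left_mono)
    also have "\<dots> < w i * \<bar>a (\<pi> i)\<bar>" using w_strict[OF \<open>i < m\<close>] \<open>0 < \<bar>a (\<pi> i)\<bar>\<close> by simp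
    finally show "\<bar>b (\<pi> (Suc i))\<bar> < \<bar>b (\<pi> i)\<bar>" using abs_b by simp
  qed
qed

definition greedy_precedes :: "(nat \<Rightarrow> real) \<Rightarrow> nat \<Rightarrow> nat \<Rightarrow> bool" where
  "greedy_precedes a k j \<longleftrightarrow> \<bar>a j\<bar> < \<bar>a k\<bar> \<or> (\<bar>a j\<bar> = \<bar>a k\<bar> \<and> k < j)"

lemma inj_if_greedy_precedes:
  fixes \<rho> :: "nat \<Rightarrow> nat"
  assumes "\<And>i j. i < j \<Longrightarrow> greedy_precedes a (\<rho> i) (\<rho> j)"
  shows "inj \<rho>"
proof (rule injI, rule ccontr)
  fix i j assume "\<rho> i = \<rho> j" "i \<noteq> j"
  have irrefl: "\<not> greedy_precedes a k k" for k unfolding greedy_precedes_def by simp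
  from \<open>i \<noteq> j\<close> consider "i < j" | "j < i" by (rule linorder_neqE_nat)
  then show False using assms[of i j] assms[of j i] \<open>\<rho> i = \<rho> j\<close> irrefl by cases auto
qed

lemma natural_greedy_seqI:
  assumes "\<And>i j. i < j \<Longrightarrow> greedy_precedes a (\<rho> i) (\<rho> j)" and "{n. a n \<noteq> 0} \<subseteq> range \<rho>"
  shows "natural_greedy_seq a \<rho>"
proof -
  have "inj \<rho>" by (rule inj_if_greedy_precedes[OF assms(1)])
  moreover have "\<bar>a (\<rho> (Suc n))\<bar> \<le> \<bar>a (\<rho> n)\<bar>" for n
    using assms(1)[of n "Suc n"] unfolding greedy_precedes_def by auto
  moreover have "\<rho> j < \<rho> k" if "j < k" "\<bar>a (\<rho> j)\<bar> = \<bar>a (\<rho> k)\<bar>" for j k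
    using assms(1)[OF that(1)] that(2) unfolding greedy_precedes_def by auto
  ultimately show ?thesis using assms(2) unfolding natural_greedy_seq_def greedy_seq_def by blast
qed

lemma greedy_precedes_first_exists:
  assumes "finite A" and levels: "\<And>\<epsilon>. \<epsilon> > 0 \<Longrightarrow> finite {k. \<epsilon> \<le> \<bar>a k\<bar>}"
  shows "\<exists>k. k \<notin> A \<and> (\<forall>j. j \<notin> A \<longrightarrow> j \<noteq> k \<longrightarrow> greedy_precedes a k j)"
proof (cases "\<exists>t. t \<notin> A \<and> a t \<noteq> 0")
  case True
  then obtain t where t: "t \<notin> A" "a t \<noteq> 0" by blast
  define F where "F = {k. k \<notin> A \<and> \<bar>a t\<bar> \<le> \<bar>a k\<bar>}"
  have "finite F" unfolding F_def by (rule finite_subset[OF _ levels[of "\<bar>a t\<bar>"]]) (use t in auto)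
  define M where "M = Max ((\<lambda>k. \<bar>a k\<bar>) ` F)"
  have "t \<in> F" unfolding F_def using t by simp
  then have le_M: "\<bar>a j\<bar> \<le> M" if "j \<in> F" for j
    unfolding M_def using \<open>finite F\<close> that by simp
  have "M \<in> (\<lambda>k. \<bar>a k\<bar>) ` F" unfolding M_def using \<open>finite F\<close> \<open>t \<in> F\<close> by (intro Max_in) auto
  then obtain k0 where "k0 \<in> F" "\<bar>a k0\<bar> = M" by auto
  define k where "k = (LEAST k. k \<in> F \<and> \<bar>a k\<bar> = M)"
  have k: "k \<in> F" "\<bar>a k\<bar> = M"
    using LeastI[of "\<lambda>k. k \<in> F \<and> \<bar>a k\<bar> = M" k0] \<open>k0 \<in> F\<close> \<open>\<bar>a k0\<bar> = M\<close> unfolding k_def by auto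
  have precedes: "greedy_precedes a k j" if "j \<notin> A" "j \<noteq> k" for j
  proof (cases "j \<in> F")
    case True
    then have "k \<le> j" if "\<bar>a j\<bar> = M" unfolding k_def using that by (simp add: Least_le)
    then show ?thesis using le_M[OF True] k \<open>j \<noteq> k\<close> unfolding greedy_precedes_def by force
  next
    case False
    then show ?thesis using le_M[OF \<open>t \<in> F\<close>] k \<open>j \<notin> A\<close> unfolding F_def greedy_precedes_def by auto
  qed
  have "k \<notin> A" using k(1) unfolding F_def by simp
  with precedes show ?thesis by blast
next
  case False
  obtain t where "t \<notin> A" using ex_new_if_finite[OF infinite_UNIV_nat \<open>finite A\<close>] by blast
  define k where "k = (LEAST k. k \<notin> A)"
  have "k \<notin> A" unfolding k_def using \<open>t \<notin> A\<close> by (rule LeastI)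
  have "greedy_precedes a k j" if "j \<notin> A" "j \<noteq> k" for j
  proof -
    have "k \<le> j" unfolding k_def using \<open>j \<notin> A\<close> by (rule Least_le)
    moreover have "a j = 0" "a k = 0" using False \<open>j \<notin> A\<close> \<open>k \<notin> A\<close> by auto
    ultimately show ?thesis using \<open>j \<noteq> k\<close> unfolding greedy_precedes_def by simp
  qed
  with \<open>k \<notin> A\<close> show ?thesis by blast
qed

lemma natural_greedy_seq_exists:
  assumes levels: "\<And>\<epsilon>. \<epsilon> > 0 \<Longrightarrow> finite {k. \<epsilon> \<le> \<bar>a k\<bar>}"
  shows "\<exists>\<rho>. natural_greedy_seq a \<rho>"
proof -
  obtain first where first:
    "\<And>A. finite A \<Longrightarrow> first A \<notin> A \<and> (\<forall>j. j \<notin> A \<longrightarrow> j \<noteq> first A \<longrightarrow> greedy_precedes a (first A) j)"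
    using greedy_precedes_first_exists[OF _ levels] by metis
  define R where "R = rec_nat {} (\<lambda>_ S. insert (first S) S)"
  define \<rho> where "\<rho> n = first (R n)" for n
  have R: "R n = \<rho> ` {..<n}" for n
    by (induction n) (simp_all add: R_def \<rho>_def lessThan_Suc)
  have \<rho>: "\<rho> n \<notin> R n \<and> (\<forall>j. j \<notin> R n \<longrightarrow> j \<noteq> \<rho> n \<longrightarrow> greedy_precedes a (\<rho> n) j)" for n
    unfolding \<rho>_def by (rule first) (simp add: R)
  have precedes: "greedy_precedes a (\<rho> i) (\<rho> j)" if "i < j" for i j
  proof -
    have "\<rho> j \<notin> \<rho> ` {..<j}" using \<rho>[of j] by (simp add: R)
    then have "\<rho> j \<notin> \<rho> ` {..<i}" "\<rho> j \<noteq> \<rho> i" using that by auto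
    then show ?thesis using \<rho>[of i] by (simp add: R)
  qed
  have "{n. a n \<noteq> 0} \<subseteq> range \<rho>"
  proof
    fix s assume "s \<in> {n. a n \<noteq> 0}"
    show "s \<in> range \<rho>"
    proof (rule ccontr)
      assume "s \<notin> range \<rho>"
      then have "s \<notin> R n" "s \<noteq> \<rho> n" for n by (auto simp: R)
      then have precedes_s: "greedy_precedes a (\<rho> n) s" for n using \<rho>[of n] by blast
      have "\<bar>a s\<bar> \<le> \<bar>a (\<rho> n)\<bar>" for n using precedes_s[of n] unfolding greedy_precedes_def by auto
      then have "range \<rho> \<subseteq> {k. \<bar>a s\<bar> \<le> \<bar>a k\<bar>}" by auto
      then have "finite (range \<rho>)"
        by (rule finite_subset) (use levels[of "\<bar>a s\<bar>"] \<open>s \<in> {n. a n \<noteq> 0}\<close> in simp)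
      then show False using finite_imageD[OF _ inj_if_greedy_precedes[where \<rho> = \<rho>, OF precedes]] by simp
    qed
  qed
  then show ?thesis using natural_greedy_seqI[where \<rho> = \<rho>, OF precedes] by blast
qed

lemma natural_greedy_seq_scale:
  assumes "c \<noteq> 0"
  shows "natural_greedy_seq (\<lambda>n. c * a n) = natural_greedy_seq a"
  using assms unfolding natural_greedy_seq_def greedy_seq_def fun_eq_iff
  by (simp add: abs_mult)

section \<open>Banach lattices\<close>

lemma norm_le_if_labs_le: "labs x \<le> labs y \<Longrightarrow> norm (x::'a::banach_lattice) \<le> norm y"
  unfolding labs_def by (rule lattice_norm)

lemma labs_ge: "(x::'a::banach_lattice) \<le> labs x" "- x \<le> labs x"
  unfolding labs_def by simp_all

lemma labs_leI: "(x::'a::banach_lattice) \<le> s \<Longrightarrow> - x \<le> s \<Longrightarrow> labs x \<le> s"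
  unfolding labs_def by simp

lemma labs_minus: "labs (- (x::'a::banach_lattice)) = labs x"
  unfolding labs_def by (simp add: sup_commute)

lemma labs_nonneg: "0 \<le> labs (x::'a::banach_lattice)"
proof -
  have "x + - x \<le> labs x + labs x" by (intro add_mono labs_ge)
  then have "0 \<le> (1/2::real) *\<^sub>R (labs x + labs x)" by (intro scaleR_nonneg_nonneg) simp_all
  then show ?thesis by (simp add: scaleR_add_right[symmetric])
qed

lemma labs_of_nonneg: "0 \<le> (x::'a::banach_lattice) \<Longrightarrow> labs x = x"
  unfolding labs_def by (rule sup_absorb1) (meson neg_le_0_iff_le order_trans)

lemma norm_labs: "norm (labs (x::'a::banach_lattice)) = norm x"
  by (intro antisym norm_le_if_labs_le) (simp_all add: labs_of_nonneg labs_nonneg)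

lemma norm_mono_nonneg: "0 \<le> (u::'a::banach_lattice) \<Longrightarrow> u \<le> v \<Longrightarrow> norm u \<le> norm v"
  by (rule norm_le_if_labs_le) (simp add: labs_of_nonneg)

lemma sup_le_labs_diff_add:
  "sup a b \<le> labs ((a::'a::banach_lattice) - c) + labs (b - d) + sup c d"
proof (rule sup_least)
  have "(a - c) + 0 + c \<le> labs (a - c) + labs (b - d) + sup c d"
    by (intro add_mono labs_ge labs_nonneg sup_ge1)
  then show "a \<le> labs (a - c) + labs (b - d) + sup c d" by simp
  have "0 + (b - d) + d \<le> labs (a - c) + labs (b - d) + sup c d"
    by (intro add_mono labs_ge labs_nonneg sup_ge2)
  then show "b \<le> labs (a - c) + labs (b - d) + sup c d" by simp
qed

lemma norm_sup_diff:
  "norm (sup a b - sup c d) \<le> norm ((a::'a::banach_lattice) - c) + norm (b - d)"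
proof -
  have "labs (sup a b - sup c d) \<le> labs (a - c) + labs (b - d)"
  proof (rule labs_leI)
    show "sup a b - sup c d \<le> labs (a - c) + labs (b - d)"
      using sup_le_labs_diff_add[of a b c d] by (simp add: diff_le_eq)
    show "- (sup a b - sup c d) \<le> labs (a - c) + labs (b - d)"
      using sup_le_labs_diff_add[of c d a b] labs_minus[of "a - c"] labs_minus[of "b - d"]
      by (simp add: diff_le_eq)
  qed
  then have "norm (sup a b - sup c d) \<le> norm (labs (a - c) + labs (b - d))"
    by (intro norm_le_if_labs_le) (simp add: labs_of_nonneg labs_nonneg)
  also have "\<dots> \<le> norm (a - c) + norm (b - d)"
    using norm_triangle_ineq by (metis norm_labs)
  finally show ?thesis .
qed

lemma tendsto_sup_banach_lattice:
  fixes f g :: "_ \<Rightarrow> 'a::banach_lattice"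
  assumes "(f \<longlongrightarrow> a) F" and "(g \<longlongrightarrow> b) F"
  shows "((\<lambda>x. sup (f x) (g x)) \<longlongrightarrow> sup a b) F"
proof -
  have "((\<lambda>x. norm (f x - a) + norm (g x - b)) \<longlongrightarrow> 0) F"
    using tendsto_add_zero[OF assms[THEN LIM_zero, THEN tendsto_norm_zero]] .
  then have "((\<lambda>x. sup (f x) (g x) - sup a b) \<longlongrightarrow> 0) F"
    by (rule Lim_null_comparison[rotated]) (simp add: norm_sup_diff)
  then show ?thesis by (rule LIM_zero_cancel)
qed

lemma tendsto_labs:
  fixes f :: "_ \<Rightarrow> 'a::banach_lattice"
  shows "(f \<longlongrightarrow> a) F \<Longrightarrow> ((\<lambda>x. labs (f x)) \<longlongrightarrow> labs a) F"
  unfolding labs_def by (intro tendsto_sup_banach_lattice tendsto_minus)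

lemma sup_scaleR: "0 \<le> c \<Longrightarrow> sup (c *\<^sub>R a) (c *\<^sub>R b) = c *\<^sub>R sup a (b::'a::banach_lattice)"
proof (cases "c = 0")
  case False
  assume "0 \<le> c"
  with False have "0 < c" by simp
  show ?thesis
  proof (rule antisym)
    show "sup (c *\<^sub>R a) (c *\<^sub>R b) \<le> c *\<^sub>R sup a b"
      by (intro sup_least scaleR_left_mono \<open>0 \<le> c\<close> sup_ge1 sup_ge2)
    have "sup a b \<le> (1/c) *\<^sub>R sup (c *\<^sub>R a) (c *\<^sub>R b)"
    proof (rule sup_least)
      have "(1/c) *\<^sub>R (c *\<^sub>R a) \<le> (1/c) *\<^sub>R sup (c *\<^sub>R a) (c *\<^sub>R b)"
        by (intro scaleR_left_mono sup_ge1) (use \<open>0 < c\<close> in simp)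
      then show "a \<le> (1/c) *\<^sub>R sup (c *\<^sub>R a) (c *\<^sub>R b)" using \<open>0 < c\<close> by simp
      have "(1/c) *\<^sub>R (c *\<^sub>R b) \<le> (1/c) *\<^sub>R sup (c *\<^sub>R a) (c *\<^sub>R b)"
        by (intro scaleR_left_mono sup_ge2) (use \<open>0 < c\<close> in simp)
      then show "b \<le> (1/c) *\<^sub>R sup (c *\<^sub>R a) (c *\<^sub>R b)" using \<open>0 < c\<close> by simp
    qed
    then have "c *\<^sub>R sup a b \<le> c *\<^sub>R ((1/c) *\<^sub>R sup (c *\<^sub>R a) (c *\<^sub>R b))"
      by (rule scaleR_left_mono) (use \<open>0 \<le> c\<close> in simp)
    then show "c *\<^sub>R sup a b \<le> sup (c *\<^sub>R a) (c *\<^sub>R b)" using \<open>0 < c\<close> by simp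
  qed
qed simp

lemma labs_scaleR: "labs (c *\<^sub>R (x::'a::banach_lattice)) = \<bar>c\<bar> *\<^sub>R labs x"
proof (cases "0 \<le> c")
  case True
  then show ?thesis unfolding labs_def using sup_scaleR[OF True, of x "- x"] by simp
next
  case False
  then have "c *\<^sub>R x = \<bar>c\<bar> *\<^sub>R - x" "- (c *\<^sub>R x) = \<bar>c\<bar> *\<^sub>R x" by simp_all
  then show ?thesis unfolding labs_def using sup_scaleR[of "\<bar>c\<bar>" "- x" x] by (simp add: sup_commute)
qed

section \<open>Greedy sums and their maximal functions\<close>

lemma Gvee_nonneg: "0 \<le> Gvee e \<pi> m x"
  by (induction m) (auto intro: le_supI1)

lemma Gvee_mono: "m \<le> m' \<Longrightarrow> Gvee e \<pi> m x \<le> Gvee e \<pi> m' x"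
  by (rule lift_Suc_mono_le[of "\<lambda>m. Gvee e \<pi> m x"]) auto

lemma labs_G_le_Gvee: "labs (G e \<pi> m x) \<le> Gvee e \<pi> m x"
  by (cases m) (auto simp: G_def labs_of_nonneg)

lemma Gvee_cong:
  "(\<And>n. n \<le> m \<Longrightarrow> G e \<pi> n x = G e' \<sigma> n y) \<Longrightarrow> Gvee e \<pi> m x = Gvee e' \<sigma> m y"
  by (induction m) auto

lemma Gvee_eq_if_greedy_terms_agree:
  assumes "greedy_terms_agree (\<lambda>n. coef e n x) \<pi> (\<lambda>n. coef e n y) \<sigma> m"
  shows "Gvee e \<sigma> m y = Gvee e \<pi> m x"
proof (rule Gvee_cong)
  fix n assume "n \<le> m"
  show "G e \<sigma> n y = G e \<pi> n x"
    unfolding G_def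
  proof (intro sum.cong refl)
    fix i assume "i \<in> {..<n}"
    then have "i < m" using \<open>n \<le> m\<close> by simp
    then show "coef e (\<sigma> i) y *\<^sub>R e (\<sigma> i) = coef e (\<pi> i) x *\<^sub>R e (\<pi> i)"
      using assms unfolding greedy_terms_agree_def by (cases "coef e (\<pi> i) x = 0") auto
  qed
qed

lemma Gvee_eventually_const:
  assumes "\<And>n. k \<le> n \<Longrightarrow> G e \<pi> n x = G e \<pi> k x" and "k \<le> m"
  shows "Gvee e \<pi> m x = Gvee e \<pi> k x"
  using assms(2)
proof (induction m rule: dec_induct)
  case (step n)
  then have "Gvee e \<pi> (Suc n) x = sup (Gvee e \<pi> k x) (labs (G e \<pi> k x))"
    using assms(1)[of "Suc n"] by simp
  also have "\<dots> = Gvee e \<pi> k x" by (rule sup_absorb1[OF labs_G_le_Gvee])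
  finally show ?case .
qed simp

lemma norm_Gvee_le_card_supp:
  assumes \<pi>: "greedy_seq (\<lambda>n. coef e n x) \<pi>" and fin: "finite (supp e x)"
  shows "norm (Gvee e \<pi> m x) \<le> norm (Gvee e \<pi> (card (supp e x)) x)"
proof -
  let ?k = "card (supp e x)"
  have zero: "coef e (\<pi> n) x = 0" if "?k \<le> n" for n
    using greedy_seq_support_iff[OF \<pi>, of n] fin that unfolding supp_def by simp
  have const: "G e \<pi> n x = G e \<pi> ?k x" if "?k \<le> n" for n
    unfolding G_def by (rule sum.mono_neutral_right) (use that zero in auto)
  have "Gvee e \<pi> (max m ?k) x = Gvee e \<pi> ?k x"
    by (rule Gvee_eventually_const[OF const max.cobounded2])
  moreover have "norm (Gvee e \<pi> m x) \<le> norm (Gvee e \<pi> (max m ?k) x)"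
    by (intro norm_mono_nonneg Gvee_nonneg Gvee_mono) simp
  ultimately show ?thesis by simp
qed

lemma Gvee_scaleR:
  assumes "\<And>n. G e \<pi> n y = c *\<^sub>R G e \<pi> n x"
  shows "Gvee e \<pi> m y = \<bar>c\<bar> *\<^sub>R Gvee e \<pi> m x"
  by (induction m) (simp_all add: assms labs_scaleR sup_scaleR)

lemma Gvee_tendsto:
  assumes "\<And>n. ((\<lambda>k. G e \<pi> n (x k)) \<longlongrightarrow> G e \<pi> n y) F"
  shows "((\<lambda>k. Gvee e \<pi> m (x k)) \<longlongrightarrow> Gvee e \<pi> m y) F"
  by (induction m) (simp_all add: assms tendsto_sup_banach_lattice tendsto_labs)

section \<open>Coefficients of a basic sequence\<close>

locale basic_seq =
  fixes e :: "nat \<Rightarrow> 'a::real_normed_vector"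
  assumes basic: "basic_sequence e"
begin

lemma span_subset_closed_span: "x \<in> span (range e) \<Longrightarrow> x \<in> closed_span e"
  unfolding closed_span_def using closure_subset by blast

lemma in_closed_span_if_sums:
  assumes "(\<lambda>n. b n *\<^sub>R e n) sums x"
  shows "x \<in> closed_span e"
proof -
  have "\<forall>N. (\<Sum>i<N. b i *\<^sub>R e i) \<in> span (range e)"
    by (intro allI span_sum span_scale span_base) auto
  moreover have "(\<lambda>N. \<Sum>i<N. b i *\<^sub>R e i) \<longlonglongrightarrow> x" using assms unfolding sums_def .
  ultimately show ?thesis
    unfolding closed_span_def closure_sequential by (intro exI[of _ "\<lambda>N. \<Sum>i<N. b i *\<^sub>R e i"]) simp
qed

lemma coef_eq_if_sums:
  assumes "(\<lambda>n. b n *\<^sub>R e n) sums x"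
  shows "coef e n x = b n"
proof -
  have "\<exists>!a. (\<lambda>k. a k *\<^sub>R e k) sums x"
    using basic in_closed_span_if_sums[OF assms] unfolding basic_sequence_def by blast
  then have "(THE a. (\<lambda>k. a k *\<^sub>R e k) sums x) = b" by (rule the1_equality) (rule assms)
  then show ?thesis unfolding coef_def by simp
qed

lemma coef_sums:
  assumes "x \<in> closed_span e"
  shows "(\<lambda>n. coef e n x *\<^sub>R e n) sums x"
proof -
  have "\<exists>!a. (\<lambda>n. a n *\<^sub>R e n) sums x" using basic assms unfolding basic_sequence_def by blast
  then show ?thesis unfolding coef_def by (rule theI')
qed

lemma closed_span_add: "x \<in> closed_span e \<Longrightarrow> y \<in> closed_span e \<Longrightarrow> x + y \<in> closed_span e"
  using sums_add[OF coef_sums coef_sums]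
  by (intro in_closed_span_if_sums[of "\<lambda>n. coef e n x + coef e n y"]) (simp add: scaleR_add_left)

lemma coef_add:
  "x \<in> closed_span e \<Longrightarrow> y \<in> closed_span e \<Longrightarrow> coef e n (x + y) = coef e n x + coef e n y"
  using sums_add[OF coef_sums coef_sums]
  by (intro coef_eq_if_sums[of "\<lambda>n. coef e n x + coef e n y"]) (simp add: scaleR_add_left)

lemma closed_span_scaleR: "x \<in> closed_span e \<Longrightarrow> c *\<^sub>R x \<in> closed_span e"
  using sums_scaleR_right[OF coef_sums, of x c] by (intro in_closed_span_if_sums[of "\<lambda>n. c * coef e n x"]) simp

lemma coef_scaleR: "x \<in> closed_span e \<Longrightarrow> coef e n (c *\<^sub>R x) = c * coef e n x"
  using sums_scaleR_right[OF coef_sums, of x c] by (intro coef_eq_if_sums[of "\<lambda>n. c * coef e n x"]) simp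

lemma coef_sum:
  assumes "finite F"
  shows "coef e n (\<Sum>k\<in>F. c k *\<^sub>R e k) = (if n \<in> F then c n else 0)"
  using sums_finite[OF assms, of "\<lambda>n. (if n \<in> F then c n else 0) *\<^sub>R e n"]
  by (intro coef_eq_if_sums) simp

lemma coef_weighted_greedy_sum:
  assumes "inj \<pi>"
  shows "coef e n (\<Sum>j<m. (real (m - j) * c (\<pi> j)) *\<^sub>R e (\<pi> j)) =
    (if n \<in> range \<pi> then real (m - inv \<pi> n) * c n else 0)"
proof -
  have "(\<Sum>j<m. (real (m - j) * c (\<pi> j)) *\<^sub>R e (\<pi> j)) =
      (\<Sum>k\<in>\<pi> ` {..<m}. (real (m - inv \<pi> k) * c k) *\<^sub>R e k)"
    using assms by (simp add: sum.reindex inj_on_subset inv_f_f)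
  also have "coef e n \<dots> = (if n \<in> range \<pi> then real (m - inv \<pi> n) * c n else 0)"
    using assms by (auto simp: coef_sum inv_f_f image_iff)
  finally show ?thesis .
qed

lemma G_add_scaleR:
  assumes "x \<in> closed_span e" "y \<in> closed_span e"
  shows "G e \<pi> n (x + c *\<^sub>R y) = G e \<pi> n x + c *\<^sub>R G e \<pi> n y"
  using assms unfolding G_def
  by (simp add: coef_add coef_scaleR closed_span_scaleR scaleR_add_left sum.distrib scaleR_sum_right)

lemma G_card_supp_eq:
  assumes x: "x \<in> closed_span e" and \<pi>: "greedy_seq (\<lambda>n. coef e n x) \<pi>" and fin: "finite (supp e x)"
  shows "G e \<pi> (card (supp e x)) x = x"
proof -
  have "\<pi> ` {..<card (supp e x)} = supp e x"
    using greedy_seq_support_iff[OF \<pi>] fin \<pi> unfolding supp_def greedy_seq_def by fastforce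
  moreover have "inj_on \<pi> {..<card (supp e x)}" using \<pi> unfolding greedy_seq_def by (auto intro: inj_on_subset)
  ultimately have "G e \<pi> (card (supp e x)) x = (\<Sum>n\<in>supp e x. coef e n x *\<^sub>R e n)"
    unfolding G_def by (metis (no_types, lifting) sum.reindex_cong)
  also have "\<dots> = x"
    using sums_finite[OF fin, of "\<lambda>n. coef e n x *\<^sub>R e n"] coef_sums[OF x]
    by (simp add: supp_def sums_unique2)
  finally show ?thesis .
qed

end

locale seminormalized_basic_seq = basic_seq +
  assumes seminormalized: "semi_normalized e"
begin

lemma coef_tendsto_zero:
  assumes "x \<in> closed_span e"
  shows "(\<lambda>n. coef e n x) \<longlonglongrightarrow> 0"
proof -
  obtain c where c: "0 < c" "\<And>n. c \<le> norm (e n)"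
    using seminormalized unfolding semi_normalized_def by blast
  have "(\<lambda>n. coef e n x *\<^sub>R e n) \<longlonglongrightarrow> 0"
    using coef_sums[OF assms] by (intro summable_LIMSEQ_zero sums_summable)
  then have lim: "(\<lambda>n. norm (coef e n x *\<^sub>R e n) / c) \<longlonglongrightarrow> 0"
    by (intro tendsto_divide_zero tendsto_norm_zero)
  have "\<forall>n. norm (coef e n x) \<le> norm (coef e n x *\<^sub>R e n) / c"
  proof
    fix n
    have "\<bar>coef e n x\<bar> * c \<le> \<bar>coef e n x\<bar> * norm (e n)" using c by (simp add: mult_left_mono)
    then show "norm (coef e n x) \<le> norm (coef e n x *\<^sub>R e n) / c" using c by (simp add: pos_le_divide_eq)
  qed
  then show ?thesis by (rule Lim_null_comparison[OF always_eventually lim])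
qed

lemma natord_natural:
  assumes x: "x \<in> closed_span e"
  shows "natural_greedy_seq (\<lambda>n. coef e n x) (natord e x)"
proof -
  have "finite {k. \<epsilon> \<le> \<bar>coef e k x\<bar>}" if \<epsilon>: "\<epsilon> > 0" for \<epsilon>
  proof -
    obtain N where "\<And>n. n \<ge> N \<Longrightarrow> \<bar>coef e n x\<bar> < \<epsilon>"
      using tendstoD[OF coef_tendsto_zero[OF x] \<epsilon>] unfolding eventually_sequentially by auto
    then have "{k. \<epsilon> \<le> \<bar>coef e k x\<bar>} \<subseteq> {..<N}" by (force simp: not_less[symmetric])
    then show ?thesis by (rule finite_subset) simp
  qed
  then have "\<exists>\<rho>. natural_greedy_ordering e \<rho> x"
    unfolding natural_greedy_ordering_iff_natural_greedy_seq by (rule natural_greedy_seq_exists)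
  then show ?thesis
    unfolding natord_def natural_greedy_ordering_iff_natural_greedy_seq[symmetric] by (rule someI_ex)
qed

lemma natord_greedy: "x \<in> closed_span e \<Longrightarrow> greedy_seq (\<lambda>n. coef e n x) (natord e x)"
  using natord_natural unfolding natural_greedy_seq_def by blast

lemma natord_scaleR:
  assumes "x \<in> closed_span e" and "c \<noteq> 0"
  shows "natord e (c *\<^sub>R x) = natord e x"
  unfolding natord_def natural_greedy_ordering_iff_natural_greedy_seq coef_scaleR[OF assms(1)]
  using natural_greedy_seq_scale[OF assms(2)] by simp

end

section \<open>Maximal greedy functions along a basic sequence in a Banach lattice\<close>

locale lattice_basic_seq = seminormalized_basic_seq e for e :: "nat \<Rightarrow> 'a::banach_lattice"
begin

lemma norm_Gvee_le_if_strict_perturbations_bounded: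
  assumes x: "x \<in> closed_span e" and \<pi>: "greedy_seq (\<lambda>n. coef e n x) \<pi>"
    and bounded: "\<And>y. y \<in> closed_span e \<Longrightarrow> supp e y = supp e x \<Longrightarrow>
      greedy_seq (\<lambda>n. coef e n y) \<pi> \<Longrightarrow> strict_greedy_prefix (\<lambda>n. coef e n y) \<pi> m \<Longrightarrow>
      norm (NGvee e m y) \<le> C * norm y"
  shows "norm (Gvee e \<pi> m x) \<le> C * norm x"
proof -
  \<comment> \<open>\<open>x + t *\<^sub>R d\<close> multiplies the coefficient of \<open>e (\<pi> i)\<close>, \<open>i < m\<close>, by \<open>1 + t (m - i)\<close>\<close>
  define d where "d = (\<Sum>j<m. (real (m - j) * coef e (\<pi> j) x) *\<^sub>R e (\<pi> j))"
  define t :: "nat \<Rightarrow> real" where "t k = inverse (real (Suc k))" for k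
  define y where "y k = x + t k *\<^sub>R d" for k
  have inj: "inj \<pi>" using \<pi> unfolding greedy_seq_def by blast
  have d: "d \<in> closed_span e"
    unfolding d_def by (intro span_subset_closed_span span_sum span_scale span_base) auto
  have y: "y k \<in> closed_span e" for k unfolding y_def by (intro closed_span_add closed_span_scaleR x d)
  have coef_d: "coef e n d = (if n \<in> range \<pi> then real (m - inv \<pi> n) * coef e n x else 0)" for n
    unfolding d_def by (rule coef_weighted_greedy_sum[OF inj])
  have coef_y: "coef e n (y k) = coef e n x + t k * coef e n d" for n k
    unfolding y_def using x d by (simp add: coef_add coef_scaleR closed_span_scaleR)
  have bound: "norm (Gvee e \<pi> m (y k)) \<le> C * norm (y k)" for k
  proof -
    have t_pos: "t k > 0" unfolding t_def by simp
    have on_\<pi>: "coef e (\<pi> i) (y k) = (1 + t k * real (m - i)) * coef e (\<pi> i) x" for i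
      by (simp add: coef_y coef_d inv_f_f[OF inj] algebra_simps)
    have off_\<pi>: "coef e n (y k) = coef e n x" if "n \<notin> range \<pi>" for n
      using that by (simp add: coef_y coef_d)
    note perturbation = greedy_seq_perturbation[OF \<pi> t_pos, of "\<lambda>n. coef e n (y k)", OF on_\<pi> off_\<pi>]
    have "supp e (y k) = supp e x" using perturbation(1) unfolding supp_def by blast
    moreover have "greedy_terms_agree (\<lambda>n. coef e n (y k)) \<pi> (\<lambda>n. coef e n (y k)) (natord e (y k)) m"
      by (rule greedy_terms_agree_if_strict_greedy_prefix[OF perturbation(2) natord_greedy[OF y] perturbation(3)])
    then have "NGvee e m (y k) = Gvee e \<pi> m (y k)" unfolding NGvee_def by (rule Gvee_eq_if_greedy_terms_agree)
    ultimately show ?thesis using bounded[OF y _ perturbation(2,3)] by simp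
  qed
  have t: "t \<longlonglongrightarrow> 0" unfolding t_def by (rule LIMSEQ_inverse_real_of_nat)
  have "y \<longlonglongrightarrow> x"
    unfolding y_def using tendsto_add[OF tendsto_const tendsto_scaleR[OF t tendsto_const]] by simp
  moreover have "(\<lambda>k. G e \<pi> n (y k)) \<longlonglongrightarrow> G e \<pi> n x" for n
    unfolding y_def G_add_scaleR[OF x d]
    using tendsto_add[OF tendsto_const tendsto_scaleR[OF t tendsto_const]] by simp
  then have "(\<lambda>k. Gvee e \<pi> m (y k)) \<longlonglongrightarrow> Gvee e \<pi> m x" by (rule Gvee_tendsto)
  ultimately show ?thesis
    using bound by (intro LIMSEQ_le[OF tendsto_norm tendsto_mult_left[OF tendsto_norm]]) auto
qed

lemma NGvee_partial_sums_eventually_eq: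
  assumes x: "x \<in> closed_span e"
  shows "eventually (\<lambda>N. NGvee e m (\<Sum>k<N. coef e k x *\<^sub>R e k) = NGvee e m x) sequentially"
proof -
  have "eventually (\<lambda>N. \<forall>i\<in>{..<m}. natord e x i < N) sequentially"
    by (intro eventually_ball_finite) (auto intro: eventually_gt_at_top)
  then show ?thesis
  proof (rule eventually_mono)
    fix N assume N: "\<forall>i\<in>{..<m}. natord e x i < N"
    define y where "y = (\<Sum>k<N. coef e k x *\<^sub>R e k)"
    have y: "y \<in> closed_span e" unfolding y_def by (intro span_subset_closed_span span_sum span_scale span_base) auto
    have coef_y: "coef e n y = (if n < N then coef e n x else 0)" for n
      unfolding y_def by (simp add: coef_sum)
    have "greedy_terms_agree (\<lambda>n. coef e n x) (natord e x) (\<lambda>n. coef e n y) (natord e y) m"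
      by (rule greedy_terms_agree_restriction[OF natord_natural[OF x] natord_natural[OF y]])
        (use N in \<open>auto simp: coef_y\<close>)
    then show "NGvee e m y = NGvee e m x" unfolding NGvee_def by (rule Gvee_eq_if_greedy_terms_agree)
  qed
qed

lemma NGvee_scaleR:
  assumes x: "x \<in> closed_span e"
  shows "NGvee e m (c *\<^sub>R x) = \<bar>c\<bar> *\<^sub>R NGvee e m x"
proof -
  have "Gvee e (natord e (c *\<^sub>R x)) m (c *\<^sub>R x) = \<bar>c\<bar> *\<^sub>R Gvee e (natord e (c *\<^sub>R x)) m x"
    by (rule Gvee_scaleR) (simp add: G_def coef_scaleR[OF x] scaleR_sum_right)
  then show ?thesis unfolding NGvee_def by (cases "c = 0") (simp_all add: natord_scaleR[OF x])
qed

lemma one_le_SUP_NGvee_norm: "1 \<le> (SUP m. NGvee_norm e m)"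
proof -
  have "norm (e 0) > 0"
    using seminormalized unfolding semi_normalized_def by (meson less_le_trans)
  define u where "u = (\<Sum>k\<in>{0}. inverse (norm (e 0)) *\<^sub>R e k)"
  have u: "u \<in> closed_span e" unfolding u_def by (intro span_subset_closed_span span_sum span_scale span_base) auto
  have "norm u = 1" unfolding u_def using \<open>norm (e 0) > 0\<close> by simp
  have "coef e n u = (if n \<in> {0} then inverse (norm (e 0)) else 0)" for n
    unfolding u_def by (rule coef_sum) simp
  then have "supp e u \<subseteq> {0}" unfolding supp_def by auto
  then have fin: "finite (supp e u)" by (rule finite_subset) simp
  define k where "k = card (supp e u)"
  have "labs (G e (natord e u) k u) \<le> NGvee e k u" unfolding NGvee_def by (rule labs_G_le_Gvee)
  then have "labs u \<le> NGvee e k u" unfolding k_def G_card_supp_eq[OF u natord_greedy[OF u] fin] .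
  then have "norm (labs u) \<le> norm (NGvee e k u)" by (rule norm_mono_nonneg[OF labs_nonneg])
  then have "ereal 1 \<le> ereal (norm (NGvee e k u))" using \<open>norm u = 1\<close> by (simp add: norm_labs)
  also have "\<dots> \<le> NGvee_norm e k" unfolding NGvee_norm_def using u \<open>norm u = 1\<close> by (intro SUP_upper) simp
  also have "\<dots> \<le> (SUP m. NGvee_norm e m)" by (rule SUP_upper) simp
  finally show ?thesis by (simp only: one_ereal_def)
qed

end

text \<open>The conditions (i)--(v) of the theorem, in this order.\<close>

definition Gvee_bound_all_greedy :: "(nat \<Rightarrow> 'a::banach_lattice) \<Rightarrow> real \<Rightarrow> bool" where
  "Gvee_bound_all_greedy e C \<longleftrightarrow> (\<forall>x\<in>closed_span e. \<forall>m. \<forall>\<pi>. greedy_ordering e \<pi> x \<longrightarrow>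
     norm (Gvee e \<pi> m x) \<le> C * norm x)"

definition Gvee_bound_natural :: "(nat \<Rightarrow> 'a::banach_lattice) \<Rightarrow> real \<Rightarrow> bool" where
  "Gvee_bound_natural e C \<longleftrightarrow> (\<forall>x\<in>closed_span e. \<forall>m. norm (NGvee e m x) \<le> C * norm x)"

definition Gvee_bound_some_greedy :: "(nat \<Rightarrow> 'a::banach_lattice) \<Rightarrow> real \<Rightarrow> bool" where
  "Gvee_bound_some_greedy e C \<longleftrightarrow> (\<forall>x\<in>closed_span e. \<forall>m. \<exists>\<pi>. greedy_ordering e \<pi> x \<and>
     norm (Gvee e \<pi> m x) \<le> C * norm x)"

definition Gvee_bound_strictly_greedy :: "(nat \<Rightarrow> 'a::banach_lattice) \<Rightarrow> real \<Rightarrow> bool" where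
  "Gvee_bound_strictly_greedy e C \<longleftrightarrow> (\<forall>x\<in>closed_span e. finite (supp e x) \<and>
     lattice_strictly_greedy e (natord e x) (card (supp e x)) x \<longrightarrow>
     norm (NGvee e (card (supp e x)) x) \<le> C * norm x)"

definition Gvee_bound_finite_support :: "(nat \<Rightarrow> 'a::banach_lattice) \<Rightarrow> real \<Rightarrow> bool" where
  "Gvee_bound_finite_support e C \<longleftrightarrow> (\<forall>x\<in>closed_span e. finite (supp e x) \<longrightarrow>
     norm (NGvee e (card (supp e x)) x) \<le> C * norm x)"

context lattice_basic_seq
begin

lemma Gvee_bound_natural_if_all_greedy: "Gvee_bound_all_greedy e C \<Longrightarrow> Gvee_bound_natural e C"
  unfolding Gvee_bound_all_greedy_def Gvee_bound_natural_def NGvee_def greedy_ordering_iff_greedy_seq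
  using natord_greedy by blast

lemma Gvee_bound_some_greedy_if_natural: "Gvee_bound_natural e C \<Longrightarrow> Gvee_bound_some_greedy e C"
  unfolding Gvee_bound_some_greedy_def Gvee_bound_natural_def NGvee_def greedy_ordering_iff_greedy_seq
  using natord_greedy by blast

lemma Gvee_bound_all_greedy_if_natural:
  assumes "Gvee_bound_natural e C"
  shows "Gvee_bound_all_greedy e C"
  unfolding Gvee_bound_all_greedy_def greedy_ordering_iff_greedy_seq
proof (intro ballI allI impI)
  fix x m \<pi> assume "x \<in> closed_span e" "greedy_seq (\<lambda>n. coef e n x) \<pi>"
  then show "norm (Gvee e \<pi> m x) \<le> C * norm x"
    by (rule norm_Gvee_le_if_strict_perturbations_bounded) (use assms in \<open>auto simp: Gvee_bound_natural_def\<close>)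
qed

lemma Gvee_bound_strictly_greedy_if_some_greedy:
  assumes "Gvee_bound_some_greedy e C"
  shows "Gvee_bound_strictly_greedy e C"
  unfolding Gvee_bound_strictly_greedy_def
proof (intro ballI impI)
  fix x assume x: "x \<in> closed_span e"
    and "finite (supp e x) \<and> lattice_strictly_greedy e (natord e x) (card (supp e x)) x"
  then have fin: "finite (supp e x)"
    and distinct: "lattice_strictly_greedy e (natord e x) (card (supp e x)) x" by auto
  let ?a = "\<lambda>n. coef e n x" and ?k = "card (supp e x)" and ?\<rho> = "natord e x"
  obtain \<pi> where \<pi>: "greedy_seq ?a \<pi>" and bound: "norm (Gvee e \<pi> ?k x) \<le> C * norm x"
    using assms x unfolding Gvee_bound_some_greedy_def greedy_ordering_iff_greedy_seq by blast
  have "?a (?\<rho> ?k) = 0"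
    using greedy_seq_support_iff[OF natord_greedy[OF x], of ?k] fin unfolding supp_def by simp
  then have "strict_greedy_prefix ?a ?\<rho> ?k"
    using strict_greedy_prefix_if_distinct[OF natord_greedy[OF x]] distinct
    unfolding lattice_strictly_greedy_def by blast
  then have "greedy_terms_agree ?a ?\<rho> ?a \<pi> ?k"
    by (rule greedy_terms_agree_if_strict_greedy_prefix[OF natord_greedy[OF x] \<pi>])
  then have "Gvee e \<pi> ?k x = NGvee e ?k x" unfolding NGvee_def by (rule Gvee_eq_if_greedy_terms_agree)
  with bound show "norm (NGvee e ?k x) \<le> C * norm x" by simp
qed

lemma Gvee_bound_finite_support_if_strictly_greedy:
  assumes "Gvee_bound_strictly_greedy e C"
  shows "Gvee_bound_finite_support e C"
  unfolding Gvee_bound_finite_support_def NGvee_def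
proof (intro ballI impI)
  fix x assume x: "x \<in> closed_span e" and fin: "finite (supp e x)"
  let ?k = "card (supp e x)"
  show "norm (Gvee e (natord e x) ?k x) \<le> C * norm x"
  proof (rule norm_Gvee_le_if_strict_perturbations_bounded[OF x natord_greedy[OF x]])
    fix y assume y: "y \<in> closed_span e" and supp: "supp e y = supp e x"
      and \<pi>: "greedy_seq (\<lambda>n. coef e n y) (natord e x)"
      and strict: "strict_greedy_prefix (\<lambda>n. coef e n y) (natord e x) ?k"
    have "greedy_terms_agree (\<lambda>n. coef e n y) (natord e x) (\<lambda>n. coef e n y) (natord e y) ?k"
      by (rule greedy_terms_agree_if_strict_greedy_prefix[OF \<pi> natord_greedy[OF y] strict])
    then have "lattice_strictly_greedy e (natord e y) ?k y"
      using strict_greedy_prefix_distinct[OF \<pi> strict]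
      unfolding lattice_strictly_greedy_def greedy_terms_agree_def by simp
    then show "norm (NGvee e ?k y) \<le> C * norm y"
      using assms y fin supp unfolding Gvee_bound_strictly_greedy_def by auto
  qed
qed

lemma Gvee_bound_natural_if_finite_support:
  assumes "Gvee_bound_finite_support e C"
  shows "Gvee_bound_natural e C"
  unfolding Gvee_bound_natural_def
proof (intro ballI allI)
  fix x m assume x: "x \<in> closed_span e"
  define y where "y N = (\<Sum>k<N. coef e k x *\<^sub>R e k)" for N
  have bound: "norm (NGvee e m (y N)) \<le> C * norm (y N)" for N
  proof -
    have y: "y N \<in> closed_span e"
      unfolding y_def by (intro span_subset_closed_span span_sum span_scale span_base) auto
    have "supp e (y N) \<subseteq> {..<N}" unfolding supp_def y_def by (auto simp: coef_sum)
    then have fin: "finite (supp e (y N))" by (rule finite_subset) simp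
    have "norm (NGvee e m (y N)) \<le> norm (NGvee e (card (supp e (y N))) (y N))"
      unfolding NGvee_def by (rule norm_Gvee_le_card_supp[OF natord_greedy[OF y] fin])
    also have "\<dots> \<le> C * norm (y N)"
      using assms y fin unfolding Gvee_bound_finite_support_def by blast
    finally show ?thesis .
  qed
  have "y \<longlonglongrightarrow> x" using coef_sums[OF x] unfolding sums_def y_def .
  then have "(\<lambda>N. C * norm (y N)) \<longlonglongrightarrow> C * norm x" by (intro tendsto_mult_left tendsto_norm)
  moreover have "eventually (\<lambda>N. norm (NGvee e m x) \<le> C * norm (y N)) sequentially"
    using NGvee_partial_sums_eventually_eq[OF x, of m] unfolding y_def[symmetric]
    by eventually_elim (metis bound)
  ultimately show "norm (NGvee e m x) \<le> C * norm x" by (rule tendsto_lowerbound) simp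
qed

lemma Gvee_bound_natural_iff_SUP_le:
  "Gvee_bound_natural e C \<longleftrightarrow> (SUP m. NGvee_norm e m) \<le> ereal C"
proof
  assume "Gvee_bound_natural e C"
  then show "(SUP m. NGvee_norm e m) \<le> ereal C"
    unfolding Gvee_bound_natural_def NGvee_norm_def by (force intro!: SUP_least)
next
  assume SUP: "(SUP m. NGvee_norm e m) \<le> ereal C"
  show "Gvee_bound_natural e C"
    unfolding Gvee_bound_natural_def
  proof (intro ballI allI)
    fix x m assume x: "x \<in> closed_span e"
    show "norm (NGvee e m x) \<le> C * norm x"
    proof (cases "x = 0")
      case True
      then show ?thesis using NGvee_scaleR[OF x, of m 0] by simp
    next
      case False
      define u where "u = inverse (norm x) *\<^sub>R x"
      have u: "u \<in> closed_span e" "norm u = 1"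
        using x False unfolding u_def by (simp_all add: closed_span_scaleR)
      have "ereal (norm (NGvee e m u)) \<le> NGvee_norm e m"
        unfolding NGvee_norm_def using u by (intro SUP_upper) simp
      also have "\<dots> \<le> ereal C" using SUP by (meson SUP_upper UNIV_I order_trans)
      finally have "norm (NGvee e m u) \<le> C" by simp
      have "NGvee e m x = norm x *\<^sub>R NGvee e m u"
        using NGvee_scaleR[OF u(1), of m "norm x"] False unfolding u_def by simp
      then have "norm (NGvee e m x) = norm x * norm (NGvee e m u)" by simp
      also have "\<dots> \<le> norm x * C" using \<open>norm (NGvee e m u) \<le> C\<close> by (rule mult_left_mono) simp
      finally show ?thesis by (simp add: mult.commute)
    qed
  qed
qed

lemma Gvee_bound_natural_least_constant:
  assumes "(SUP m. NGvee_norm e m) \<noteq> \<infinity>"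
  defines "K \<equiv> real_of_ereal (SUP m. NGvee_norm e m)"
  shows "0 < K" and "Gvee_bound_natural e K" and "Gvee_bound_natural e C \<Longrightarrow> K \<le> C"
proof -
  have SUP: "(SUP m. NGvee_norm e m) = ereal K"
    using assms one_le_SUP_NGvee_norm unfolding K_def by (cases "SUP m. NGvee_norm e m") auto
  show "0 < K" using one_le_SUP_NGvee_norm unfolding SUP by simp
  show "Gvee_bound_natural e K" unfolding Gvee_bound_natural_iff_SUP_le SUP by simp
  show "K \<le> C" if "Gvee_bound_natural e C" using that unfolding Gvee_bound_natural_iff_SUP_le SUP by simp
qed

end

theorem lemma3p1:
  fixes e :: "nat \<Rightarrow> 'a::banach_lattice" and C :: real
  assumes "basic_sequence e" and "semi_normalized e" and "C > 0"
  shows "((\<forall>x\<in>closed_span e. \<forall>m. \<forall>\<pi>. greedy_ordering e \<pi> x \<longrightarrow>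
              norm (Gvee e \<pi> m x) \<le> C * norm x)
       \<longleftrightarrow> (\<forall>x\<in>closed_span e. \<forall>m. norm (NGvee e m x) \<le> C * norm x))
   \<and> ((\<forall>x\<in>closed_span e. \<forall>m. norm (NGvee e m x) \<le> C * norm x)
       \<longleftrightarrow> (\<forall>x\<in>closed_span e. \<forall>m. \<exists>\<pi>. greedy_ordering e \<pi> x \<and>
              norm (Gvee e \<pi> m x) \<le> C * norm x))
   \<and> ((\<forall>x\<in>closed_span e. \<forall>m. norm (NGvee e m x) \<le> C * norm x)
       \<longleftrightarrow> (\<forall>x\<in>closed_span e. finite (supp e x) \<and>
              lattice_strictly_greedy e (natord e x) (card (supp e x)) x \<longrightarrow>
              norm (NGvee e (card (supp e x)) x) \<le> C * norm x))
   \<and> ((\<forall>x\<in>closed_span e. \<forall>m. norm (NGvee e m x) \<le> C * norm x)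
       \<longleftrightarrow> (\<forall>x\<in>closed_span e. finite (supp e x) \<longrightarrow>
              norm (NGvee e (card (supp e x)) x) \<le> C * norm x))
   \<and> (\<forall>C'>0. (\<forall>x\<in>closed_span e. \<forall>m. norm (NGvee e m x) \<le> C' * norm x)
              \<longleftrightarrow> (SUP m. NGvee_norm e m) \<le> ereal C')
   \<and> ((SUP m. NGvee_norm e m) \<noteq> \<infinity> \<longrightarrow>
       (let K = real_of_ereal (SUP m. NGvee_norm e m);
            Cs = {C'. C' > 0 \<and> (\<forall>x\<in>closed_span e. \<forall>m. norm (NGvee e m x) \<le> C' * norm x)}
        in K \<in> Cs \<and> (\<forall>C'\<in>Cs. K \<le> C')))"
proof -
  interpret lattice_basic_seq e using assms(1,2) by unfold_locales
  show ?thesis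
    unfolding Gvee_bound_all_greedy_def[symmetric] Gvee_bound_natural_def[symmetric]
      Gvee_bound_some_greedy_def[symmetric] Gvee_bound_strictly_greedy_def[symmetric]
      Gvee_bound_finite_support_def[symmetric] Let_def
    using Gvee_bound_natural_if_all_greedy Gvee_bound_all_greedy_if_natural
      Gvee_bound_some_greedy_if_natural Gvee_bound_strictly_greedy_if_some_greedy
      Gvee_bound_finite_support_if_strictly_greedy Gvee_bound_natural_if_finite_support
      Gvee_bound_natural_iff_SUP_le Gvee_bound_natural_least_constant
    by (intro conjI) blast+
qed

end
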